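(* Write the $n$-th $*$-cocharacter of $M_{1,2}(F)$ as $\chi_n^*(M_{1,2}(F))=\sum m_{\langle\lambda\rangle}\chi_{\langle\lambda\rangle}$, the sum over multipartitions $\langle\lambda\rangle=(\lambda(1),\lambda(2),\lambda(3),\lambda(4))\vdash n$ with $h(\lambda(1))\le2$, $h(\lambda(2))\le3$, $h(\lambda(3))\le2$, $h(\lambda(4))\le2$. If $\langle\lambda\rangle=(\lambda(1),\lambda(2),\emptyset,\emptyset)$, then $m_{\langle\lambda\rangle}\neq0$ if and only if $h(\lambda(1))\le1$.
   Context: $F$ is a field of characteristic zero. $M_{1,2}(F)$ is $M_3(F)$ with $\mathbb{Z}_2$-grading with even part spanned by $e_{11},e_{22},e_{23},e_{32},e_{33}$, odd part by $e_{12},e_{13},e_{21},e_{31}$, and orthosymplectic superinvolution $*$ sending the matrix with rows $(a,b,c),(d,e,f),(g,h,i)$ to the matrix with rows $(a,-g,d),(c,i,-f),(-b,-h,e)$. Its even symmetric, even skew, odd symmetric, odd skew parts are $\mathrm{span}\{e_{11},e_{22}+e_{33}\}$, $\mathrm{span}\{e_{22}-e_{33},e_{23},e_{32}\}$, $\mathrm{span}\{e_{12}-e_{31},e_{13}+e_{21}\}$, $\mathrm{span}\{e_{12}+e_{31},e_{13}-e_{21}\}$. In the free $*$-superalgebra on variables $y_i^+,y_i^-,z_i^+,z_i^-$ (even symmetric, even skew, odd symmetric, odd skew), a $*$-identity is a polynomial vanishing under all substitutions of the variables by elements of the corresponding parts; $Id_2^*$ denotes the set of them. $P_n^*$ is the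 span of the monomials $w_{\sigma(1)}\cdots w_{\sigma(n)}$, $\sigma\in S_n$, $w_i\in\{y_i^+,y_i^-,z_i^+,z_i^-\}$. The group $\mathbb{H}_n=(\mathbb{Z}_2\times\mathbb{Z}_2)\wr S_n$, with $\mathbb{Z}_2\times\mathbb{Z}_2=\{1,*,\zeta,*\zeta\}$, acts on $P_n^*$: $h=(a_1,\dots,a_n;\sigma)$ sends $y_i^+\mapsto y_{\sigma(i)}^+$, $y_i^-\mapsto \pm y_{\sigma(i)}^-$ (sign $+$ iff $a_{\sigma(i)}\in\{1,\zeta\}$), $z_i^+\mapsto\pm z_{\sigma(i)}^+$ ($+$ iff $a_{\sigma(i)}\in\{1,*\}$), $z_i^-\mapsto\pm z_{\sigma(i)}^-$ ($+$ iff $a_{\sigma(i)}\in\{1,*\zeta\}$). The character of the $\mathbb{H}_n$-module $P_n^*/(P_n^*\cap Id_2^*(M_{1,2}(F)))$ is the $n$-th $*$-cocharacter $\chi_n^*(M_{1,2}(F))$. Irreducible $\mathbb{H}_n$-characters $\chi_{\langle\lambda\rangle}$ correspond to multipartitions $\langle\lambda\rangle=(\lambda(1),\dots,\lambda(4))$, $\lambda(i)\vdash n_i$, $n_1+\dots+n_4=n$, where $\lambda(1),\lambda(2),\lambda(3),\lambda(4)$ correspond respectively to the variables of type $y^+,y^-,z^+,z^-$; equivalently $m_{\langle\lambda\rangle}$ is the multiplicity of $\chi_{\lambda(1)}\otimes\cdots\otimes\chi_{\lambda(4)}$ in the $S_{n_1}\times\cdots\times S_{n_4}$-character of the multilinear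 polynomials with $n_1,\dots,n_4$ variables of the four types modulo identities. $h(\mu)$ is the number of parts (height) of a partition $\mu$, and $\emptyset$ the empty partition; only multipartitions with the stated height bounds can occur with nonzero multiplicity. *)

theory Defs
  imports Main "HOL.Vector_Spaces" "HOL-Library.Function_Algebras" "HOL-Combinatorics.Permutations"
begin

text \<open>3x3 matrices over F are functions nat => nat => F, indices 0,1,2
  (paper index i corresponds to i-1 here); entries outside are 0.\<close>

type_synonym 'a mat3 = "nat \<Rightarrow> nat \<Rightarrow> 'a"

definition E :: "nat \<Rightarrow> nat \<Rightarrow> 'a::field mat3" where
  "E i j = (\<lambda>p q. if p = i \<and> q = j then 1 else 0)"

definition smat :: "'a::field \<Rightarrow> 'a mat3 \<Rightarrow> 'a mat3" where
  "smat c A = (\<lambda>p q. c * A p q)"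

definition mmul :: "'a::field mat3 \<Rightarrow> 'a mat3 \<Rightarrow> 'a mat3" where
  "mmul A B = (\<lambda>i j. \<Sum>k<3. A i k * B k j)"

definition I3 :: "'a::field mat3" where
  "I3 = (\<lambda>i j. if i = j \<and> i < 3 then 1 else 0)"

definition mprod :: "'a::field mat3 list \<Rightarrow> 'a mat3" where
  "mprod As = foldr mmul As I3"

text \<open>The four homogeneous parts (types 0,1,2,3 = y+, y-, z+, z-).\<close>

definition part :: "nat \<Rightarrow> 'a::field mat3 set" where
  "part t =
    (if t = 0 then {smat a (E 0 0) + smat b (E 1 1 + E 2 2) | a b. True}
     else if t = 1 then {smat a (E 1 1 - E 2 2) + smat b (E 1 2) + smat c (E 2 1) | a b c. True}
     else if t = 2 then {smat a (E 0 1 - E 2 0) + smat b (E 0 2 + E 1 0) | a b. True}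
     else {smat a (E 0 1 + E 2 0) + smat b (E 0 2 - E 1 0) | a b. True})"

definition is_partition :: "nat list \<Rightarrow> bool" where
  "is_partition lam \<longleftrightarrow> (\<forall>x\<in>set lam. 0 < x) \<and> sorted_wrt (\<ge>) lam"

text \<open>Letters 0..n-1 (n = total size) are distributed over the four blocks in order;
  inside block b, its letters fill the Young diagram of lams!b row by row.\<close>

definition block_of :: "nat list list \<Rightarrow> nat \<Rightarrow> nat" where
  "block_of lams k = (LEAST b. k < sum_list (map sum_list (take (Suc b) lams)))"

definition local_idx :: "nat list list \<Rightarrow> nat \<Rightarrow> nat" where
  "local_idx lams k = k - sum_list (map sum_list (take (block_of lams k) lams))"

definition row_in :: "nat list \<Rightarrow> nat \<Rightarrow> nat" where
  "row_in lam k = (LEAST r. k < sum_list (take (Suc r) lam))"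

definition col_in :: "nat list \<Rightarrow> nat \<Rightarrow> nat" where
  "col_in lam k = k - sum_list (take (row_in lam k) lam)"

definition row_lab :: "nat list list \<Rightarrow> nat \<Rightarrow> nat \<times> nat" where
  "row_lab lams k = (block_of lams k, row_in (lams ! block_of lams k) (local_idx lams k))"

definition col_lab :: "nat list list \<Rightarrow> nat \<Rightarrow> nat \<times> nat" where
  "col_lab lams k = (block_of lams k, col_in (lams ! block_of lams k) (local_idx lams k))"

text \<open>A multilinear polynomial in x_0..x_{n-1} is a coefficient function on words;
  only words that are arrangements of 0..n-1 matter.\<close>

definition mlwords :: "nat \<Rightarrow> nat list set" where
  "mlwords n = {w. distinct w \<and> set w = {0..<n}}"

definition act :: "(nat \<Rightarrow> nat) \<Rightarrow> (nat list \<Rightarrow> 'a) \<Rightarrow> (nat list \<Rightarrow> 'a)" where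
  "act \<sigma> f = (\<lambda>v. f (map (inv \<sigma>) v))"   \<comment> \<open>x_i \<mapsto> x_{\<sigma> i}\<close>

definition row_group :: "nat list list \<Rightarrow> (nat \<Rightarrow> nat) set" where
  "row_group lams = {r. r permutes {0..<sum_list (map sum_list lams)} \<and>
      (\<forall>k < sum_list (map sum_list lams). row_lab lams (r k) = row_lab lams k)}"

definition col_group :: "nat list list \<Rightarrow> (nat \<Rightarrow> nat) set" where
  "col_group lams = {c. c permutes {0..<sum_list (map sum_list lams)} \<and>
      (\<forall>k < sum_list (map sum_list lams). col_lab lams (c k) = col_lab lams k)}"

text \<open>Product of the Young symmetrizers of the four tableaux (one per block).\<close>

definition young_sym :: "nat list list \<Rightarrow> (nat list \<Rightarrow> 'a::field) \<Rightarrow> (nat list \<Rightarrow> 'a)" where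
  "young_sym lams f =
     (\<lambda>v. \<Sum>r\<in>row_group lams. \<Sum>c\<in>col_group lams. of_int (sign c) * act r (act c f) v)"

definition admissible :: "nat list list \<Rightarrow> (nat \<Rightarrow> 'a::field mat3) \<Rightarrow> bool" where
  "admissible lams s \<longleftrightarrow> (\<forall>k < sum_list (map sum_list lams). s k \<in> part (block_of lams k))"

text \<open>Evaluation of a polynomial as a function of admissible substitutions; the kernel
  of this map (restricted to P_{n1,...,n4}) is exactly P \<inter> Id_2^*(M_{1,2}(F)), so its image
  is isomorphic to the quotient module.\<close>

definition eval_poly :: "nat list list \<Rightarrow> (nat list \<Rightarrow> 'a::field) \<Rightarrow> (nat \<Rightarrow> 'a mat3) \<Rightarrow> 'a mat3" where
  "eval_poly lams f = (\<lambda>s. if admissible lams s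
      then (\<lambda>i j. \<Sum>w\<in>mlwords (sum_list (map sum_list lams)). f w * mprod (map s w) i j)
      else 0)"

definition fscale :: "'a::field \<Rightarrow> ((nat \<Rightarrow> 'a mat3) \<Rightarrow> 'a mat3) \<Rightarrow> ((nat \<Rightarrow> 'a mat3) \<Rightarrow> 'a mat3)" where
  "fscale c g = (\<lambda>s i j. c * g s i j)"

text \<open>Multiplicity of chi_{lam1} (x) ... (x) chi_{lam4} in the S_{n1} x ... x S_{n4}-character of
  P_{n1,...,n4} / (P_{n1,...,n4} \<inter> Id): the dimension of e_T (P/(P\<inter>Id)), where e_T is the
  Young symmetrizer of the multitableau.\<close>

definition star_mult :: "'a::field itself \<Rightarrow> nat list \<Rightarrow> nat list \<Rightarrow> nat list \<Rightarrow> nat list \<Rightarrow> nat" where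
  "star_mult _ l1 l2 l3 l4 =
     vector_space.dim (fscale :: 'a \<Rightarrow> _)
       (range (\<lambda>f :: nat list \<Rightarrow> 'a. eval_poly [l1,l2,l3,l4] (young_sym [l1,l2,l3,l4] f)))"

end

theory Submission
  imports Defs "HOL-Library.Disjoint_Sets"
begin

(*
  The multiplicity is the dimension of the space of evaluations of the symmetrized
  polynomials e_T f; this space is spanned by the finitely many images of monomials, so the
  multiplicity vanishes exactly when every e_T f evaluates to zero.

  The symmetric even elements diag(a, b, b) commute with all even elements. If the first
  shape has two rows, the letters 0 and a of its first column both carry such values, so
  composing with the column transposition (0 a) fixes every evaluated monomial but flips
  the sign: the column antisymmetrizer kills every evaluation.

  If the first shape has at most one row, send its letters to the identity and the letters
  of rows 1, 2, 3 of the second tableau to H = e22 - e33, X = e23 + e32, Y = e23 - e32.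
  This substitution is constant along rows, and for the word read column by column the
  column antisymmetrizer factors into standard polynomials of the columns:
  St3(H, X, Y) = -6 J, St2(H, X) = 2 Y and St1(H) = H with J = e22 + e33. All of them are
  invertible in the lower right 2x2 corner, so their product does not vanish.
*)

section \<open>Arithmetic of 3x3 matrices\<close>

lemma sum_lessThan_3: "(\<Sum>k<(3::nat). f k) = f 0 + f 1 + (f 2 :: 'a::comm_monoid_add)"
  by (simp add: numeral_3_eq_3 numeral_2_eq_2 lessThan_Suc add.commute add.left_commute)

lemma sum_apply: "(\<Sum>a\<in>A. f a) x = (\<Sum>a\<in>A. f a x)"
  by (induction A rule: infinite_finite_induct) auto

text \<open>Matrices are functions on all of \<^typ>\<open>nat\<close>, so \<^const>\<open>I3\<close> is a two-sided unit only
  for those vanishing outside the 3x3 block.\<close>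

definition in_M3 :: "'a::field mat3 \<Rightarrow> bool" where
  "in_M3 A \<longleftrightarrow> (\<forall>i j. 3 \<le> i \<or> 3 \<le> j \<longrightarrow> A i j = 0)"

lemma in_M3_I3: "in_M3 I3"
  by (auto simp: in_M3_def I3_def)

lemma in_M3_mmul: "in_M3 A \<Longrightarrow> in_M3 B \<Longrightarrow> in_M3 (mmul A B)"
  by (auto simp: in_M3_def mmul_def)

lemma I3_mmul: "in_M3 A \<Longrightarrow> mmul I3 A = A"
  by (auto simp: mmul_def sum_lessThan_3 I3_def in_M3_def fun_eq_iff)

lemma mmul_I3: "in_M3 A \<Longrightarrow> mmul A I3 = A"
  by (auto simp: mmul_def sum_lessThan_3 I3_def in_M3_def fun_eq_iff)

lemma mmul_assoc: "mmul (mmul A B) C = mmul A (mmul B C)"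
  unfolding mmul_def
  by (auto simp: fun_eq_iff sum_distrib_left sum_distrib_right mult.assoc intro: sum.swap)

lemma mmul_sum_left: "mmul (\<Sum>a\<in>A. f a) B = (\<Sum>a\<in>A. mmul (f a) B)"
  by (induction A rule: infinite_finite_induct)
     (auto simp: mmul_def fun_eq_iff distrib_right sum.distrib)

lemma mmul_sum_right: "mmul B (\<Sum>a\<in>A. f a) = (\<Sum>a\<in>A. mmul B (f a))"
  by (induction A rule: infinite_finite_induct)
     (auto simp: mmul_def fun_eq_iff distrib_left sum.distrib)

lemma smat_mmul_smat: "mmul (smat a A) (smat b B) = smat (a * b) (mmul A B)"
  by (auto simp: mmul_def smat_def fun_eq_iff sum_distrib_left mult_ac)

lemma smat_eq_0_iff: "smat c A = 0 \<longleftrightarrow> c = 0 \<or> A = (0 :: 'a::field mat3)"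
  by (auto simp: smat_def fun_eq_iff)

lemma smat_1 [simp]: "smat 1 A = A"
  and smat_minus_1 [simp]: "smat (-1) A = - A"
  by (auto simp: smat_def fun_eq_iff)

lemma mprod_Nil [simp]: "mprod [] = I3"
  and mprod_Cons [simp]: "mprod (x # xs) = mmul x (mprod xs)"
  by (simp_all add: mprod_def)

lemma in_M3_mprod: "\<forall>x\<in>set xs. in_M3 x \<Longrightarrow> in_M3 (mprod xs)"
  by (induction xs) (auto simp: in_M3_I3 in_M3_mmul)

lemma mprod_append:
  assumes "\<forall>x\<in>set ys. in_M3 x"
  shows "mprod (xs @ ys) = mmul (mprod xs) (mprod ys)"
  by (induction xs) (simp_all add: I3_mmul in_M3_mprod assms mmul_assoc)

lemma part_0_commute:
  fixes x y :: "'a::field mat3"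
  assumes "x \<in> part 0" "y \<in> part 0 \<union> part 1"
  shows "mmul x y = mmul y x"
  using assms unfolding part_def
  by (auto simp: mmul_def sum_lessThan_3 E_def smat_def fun_eq_iff)

lemma mprod_pull_out_central:
  assumes "distinct u" "a \<in> set u" "\<forall>x\<in>set u. mmul (t a) (t x) = mmul (t x) (t a)"
  shows "mprod (map t u) = mmul (t a) (mprod (map t (removeAll a u)))"
  using assms
proof (induction u)
  case (Cons x u)
  show ?case
  proof (cases "x = a")
    case True
    with Cons.prems show ?thesis by (simp add: distinct_removeAll)
  next
    case False
    with Cons have "mprod (map t (x # u)) = mmul (t x) (mmul (t a) (mprod (map t (removeAll a u))))"
      by simp
    also have "\<dots> = mmul (t a) (mmul (t x) (mprod (map t (removeAll a u))))"
      using Cons.prems by (simp flip: mmul_assoc)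
    finally show ?thesis using False by simp
  qed
qed simp

lemma mprod_transpose_central:
  assumes "distinct u" "a \<in> set u" "b \<in> set u" "a \<noteq> b"
    and "\<forall>x\<in>set u. mmul (t a) (t x) = mmul (t x) (t a)"
    and "\<forall>x\<in>set u. mmul (t b) (t x) = mmul (t x) (t b)"
  shows "mprod (map (t \<circ> transpose a b) u) = mprod (map t u)"
proof -
  let ?t' = "t \<circ> transpose a b"
  define rest where "rest = removeAll b (removeAll a u)"
  have pull: "mprod (map s u) = mmul (s a) (mmul (s b) (mprod (map s rest)))"
    if "\<forall>x\<in>set u. mmul (s a) (s x) = mmul (s x) (s a)"
       "\<forall>x\<in>set u. mmul (s b) (s x) = mmul (s x) (s b)" for s
    using mprod_pull_out_central[of u a s] mprod_pull_out_central[of "removeAll a u" b s] that assms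
    by (simp add: rest_def distinct_removeAll)
  have swapped_central: "\<forall>x\<in>set u. mmul (?t' a) (?t' x) = mmul (?t' x) (?t' a)"
            "\<forall>x\<in>set u. mmul (?t' b) (?t' x) = mmul (?t' x) (?t' b)"
    using assms(2-6) by (auto simp: transpose_def)
  have rest: "map ?t' rest = map t rest"
    by (auto simp: rest_def transpose_def)
  have "mprod (map ?t' u) = mmul (?t' a) (mmul (?t' b) (mprod (map t rest)))"
    using pull[OF swapped_central] unfolding rest .
  also have "\<dots> = mmul (t b) (mmul (t a) (mprod (map t rest)))"
    by simp
  also have "\<dots> = mmul (t a) (mmul (t b) (mprod (map t rest)))"
    using assms(3,5) by (simp flip: mmul_assoc)
  also have "\<dots> = mprod (map t u)"
    using pull[OF assms(5,6)] by simp
  finally show ?thesis .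
qed

section \<open>The Young symmetrizer of a multitableau\<close>

abbreviation total_size :: "nat list list \<Rightarrow> nat" where
  "total_size lams \<equiv> sum_list (map sum_list lams)"

lemma finite_mlwords: "finite (mlwords n)"
proof (rule finite_subset)
  show "mlwords n \<subseteq> {xs. set xs \<subseteq> {0..<n} \<and> length xs = n}"
    by (auto simp: mlwords_def dest: distinct_card)
  show "finite {xs. set xs \<subseteq> {0..<n} \<and> length xs = n}"
    by (rule finite_lists_length_eq) simp
qed

lemma bij_betw_map_mlwords:
  assumes "\<pi> permutes {0..<n}"
  shows "bij_betw (map \<pi>) (mlwords n) (mlwords n)"
proof (rule bij_betwI[where g = "map (inv \<pi>)"])
  have inv: "inv \<pi> permutes {0..<n}"
    using assms by (rule permutes_inv)
  show "map \<pi> \<in> mlwords n \<rightarrow> mlwords n"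
    using permutes_inj[OF assms] by (auto simp: mlwords_def distinct_map inj_on_def permutes_image[OF assms])
  show "map (inv \<pi>) \<in> mlwords n \<rightarrow> mlwords n"
    using permutes_inj[OF inv] by (auto simp: mlwords_def distinct_map inj_on_def permutes_image[OF inv])
  show "map (inv \<pi>) (map \<pi> x) = x" "map \<pi> (map (inv \<pi>) y) = y" for x y
    using permutes_inverses[OF assms] by (simp_all add: map_idI)
qed

lemma row_group_permutes: "r \<in> row_group lams \<Longrightarrow> r permutes {0..<total_size lams}"
  by (simp add: row_group_def)

lemma col_group_permutes: "c \<in> col_group lams \<Longrightarrow> c permutes {0..<total_size lams}"
  by (simp add: col_group_def)

lemma finite_row_group: "finite (row_group lams)"
  by (rule finite_subset[OF _ finite_permutations[of "{0..<total_size lams}"]])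
     (auto simp: row_group_def)

lemma col_group_compose:
  assumes "c \<in> col_group lams" "d \<in> col_group lams"
  shows "c \<circ> d \<in> col_group lams"
  using assms permutes_in_image[OF col_group_permutes[OF assms(2)]]
  by (auto simp: col_group_def intro: permutes_compose)

lemma block_of_row_group:
  "r \<in> row_group lams \<Longrightarrow> k < total_size lams \<Longrightarrow> block_of lams (r k) = block_of lams k"
  by (auto simp: row_group_def row_lab_def)

lemma block_of_col_group:
  "c \<in> col_group lams \<Longrightarrow> k < total_size lams \<Longrightarrow> block_of lams (c k) = block_of lams k"
  by (auto simp: col_group_def col_lab_def)

lemma admissible_compose_row_col_group:
  assumes "admissible lams s" "r \<in> row_group lams" "c \<in> col_group lams"
  shows "admissible lams (s \<circ> r \<circ> c)"
  unfolding admissible_def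
proof (intro allI impI)
  fix k assume k: "k < total_size lams"
  then have ck: "c k < total_size lams"
    using permutes_in_image[OF col_group_permutes[OF assms(3)]] by simp
  then have "r (c k) < total_size lams"
    using permutes_in_image[OF row_group_permutes[OF assms(2)]] by simp
  then show "(s \<circ> r \<circ> c) k \<in> part (block_of lams k)"
    using assms(1) block_of_row_group[OF assms(2) ck] block_of_col_group[OF assms(3) k]
    by (auto simp: admissible_def)
qed

lemma sum_take_mono: "i \<le> j \<Longrightarrow> sum_list (take i (xs :: nat list)) \<le> sum_list (take j xs)"
  by (metis le_add_diff_inverse le_add1 sum_list_append take_add)

lemma Least_sum_take_eq:
  fixes xs :: "nat list"
  assumes "sum_list (take b xs) \<le> k" "k < sum_list (take (Suc b) xs)"
  shows "(LEAST b'. k < sum_list (take (Suc b') xs)) = b"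
proof (rule Least_equality)
  fix b' assume "k < sum_list (take (Suc b') xs)"
  with assms(1) show "b \<le> b'"
    using sum_take_mono[of "Suc b'" b xs] by (meson leD not_less_eq_eq order.trans)
qed (rule assms(2))

lemma row_in_eq:
  "sum_list (take i lam) \<le> k \<Longrightarrow> k < sum_list (take (Suc i) lam) \<Longrightarrow> row_in lam k = i"
  unfolding row_in_def by (rule Least_sum_take_eq)

lemma block_of_eq:
  "sum_list (take b (map sum_list lams)) \<le> k \<Longrightarrow> k < sum_list (take (Suc b) (map sum_list lams))
   \<Longrightarrow> block_of lams k = b"
  unfolding block_of_def by (simp add: take_map[symmetric] Least_sum_take_eq)

lemma local_idx_eq:
  "block_of lams k = b \<Longrightarrow> local_idx lams k = k - sum_list (take b (map sum_list lams))"
  unfolding local_idx_def by (simp add: take_map)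

lemma block_of_le_1:
  "k < sum_list l1 + sum_list l2 \<Longrightarrow> block_of [l1, l2, l3, l4] k \<le> 1"
  unfolding block_of_def by (rule Least_le) (simp add: numeral_2_eq_2)

lemma eval_young_sym:
  assumes "admissible lams s"
  shows "eval_poly lams (young_sym lams f) s i j =
    (\<Sum>r\<in>row_group lams. \<Sum>c\<in>col_group lams. of_int (sign c) *
        (\<Sum>u\<in>mlwords (total_size lams). f u * mprod (map (s \<circ> r \<circ> c) u) i j))"
proof -
  let ?W = "mlwords (total_size lams)"
  have "eval_poly lams (young_sym lams f) s i j =
    (\<Sum>w\<in>?W. (\<Sum>r\<in>row_group lams. \<Sum>c\<in>col_group lams.
        of_int (sign c) * f (map (inv c) (map (inv r) w))) * mprod (map s w) i j)"
    using assms by (simp add: eval_poly_def young_sym_def act_def)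
  also have "\<dots> = (\<Sum>r\<in>row_group lams. \<Sum>c\<in>col_group lams. of_int (sign c) *
    (\<Sum>w\<in>?W. f (map (inv c) (map (inv r) w)) * mprod (map s w) i j))"
    by (simp add: sum_distrib_right sum_distrib_left mult.assoc sum.swap[of _ ?W]
          sum.swap[of _ ?W "col_group lams"])
  also have "\<dots> = (\<Sum>r\<in>row_group lams. \<Sum>c\<in>col_group lams. of_int (sign c) *
        (\<Sum>u\<in>?W. f u * mprod (map (s \<circ> r \<circ> c) u) i j))"
  proof (intro sum.cong refl)
    fix r c assume "r \<in> row_group lams" "c \<in> col_group lams"
    then have r: "r permutes {0..<total_size lams}" and c: "c permutes {0..<total_size lams}"
      by (simp_all add: row_group_permutes col_group_permutes)
    have "(\<Sum>w\<in>?W. f (map (inv c) (map (inv r) w)) * mprod (map s w) i j) =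
          (\<Sum>u\<in>?W. f u * mprod (map (s \<circ> r \<circ> c) u) i j)"
      using permutes_inverses(2)[OF r] permutes_inverses(2)[OF c]
      by (subst sum.reindex_bij_betw[OF bij_betw_map_mlwords[OF permutes_compose[OF c r]], symmetric])
         (simp add: map_idI comp_assoc)
    then show "of_int (sign c) * (\<Sum>w\<in>?W. f (map (inv c) (map (inv r) w)) * mprod (map s w) i j) =
          of_int (sign c) * (\<Sum>u\<in>?W. f u * mprod (map (s \<circ> r \<circ> c) u) i j)"
      by simp
  qed
  finally show ?thesis .
qed

definition word_indicator :: "nat list \<Rightarrow> nat list \<Rightarrow> 'a::field" where
  "word_indicator u = (\<lambda>w. if w = u then 1 else 0)"

lemma eval_young_sym_word_indicator:
  assumes "admissible lams s" "u \<in> mlwords (total_size lams)"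
  shows "eval_poly lams (young_sym lams (word_indicator u)) s i j =
    (\<Sum>r\<in>row_group lams. \<Sum>c\<in>col_group lams. of_int (sign c) * mprod (map (s \<circ> r \<circ> c) u) i j)"
proof -
  have "(\<Sum>w\<in>mlwords (total_size lams). word_indicator u w * mprod (map t w) i j) =
        mprod (map t u) i j" for t :: "nat \<Rightarrow> 'a mat3"
    using assms(2) by (simp add: word_indicator_def finite_mlwords if_distrib[of "\<lambda>x. x * _"]
        cong: if_cong)
  then show ?thesis
    by (simp add: eval_young_sym[OF assms(1)])
qed

lemma eval_young_sym_eq_sum_word_indicator:
  "eval_poly lams (young_sym lams f) =
    (\<Sum>u\<in>mlwords (total_size lams). fscale (f u) (eval_poly lams (young_sym lams (word_indicator u))))"
proof (intro ext)
  fix s :: "nat \<Rightarrow> 'a mat3" and i j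
  let ?W = "mlwords (total_size lams)" and ?R = "row_group lams" and ?C = "col_group lams"
  let ?M = "\<lambda>r c u. mprod (map (s \<circ> r \<circ> c) u) i j"
  show "eval_poly lams (young_sym lams f) s i j =
    (\<Sum>u\<in>?W. fscale (f u) (eval_poly lams (young_sym lams (word_indicator u)))) s i j"
  proof (cases "admissible lams s")
    case False
    then show ?thesis by (simp add: eval_poly_def sum_apply fscale_def)
  next
    case True
    have "(\<Sum>u\<in>?W. fscale (f u) (eval_poly lams (young_sym lams (word_indicator u)))) s i j
        = (\<Sum>u\<in>?W. f u * (\<Sum>r\<in>?R. \<Sum>c\<in>?C. of_int (sign c) * ?M r c u))"
      by (simp add: sum_apply fscale_def eval_young_sym_word_indicator[OF True])
    also have "\<dots> = (\<Sum>u\<in>?W. \<Sum>r\<in>?R. \<Sum>c\<in>?C. of_int (sign c) * (f u * ?M r c u))"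
      by (simp only: sum_distrib_left mult.left_commute)
    also have "\<dots> = (\<Sum>r\<in>?R. \<Sum>u\<in>?W. \<Sum>c\<in>?C. of_int (sign c) * (f u * ?M r c u))"
      by (rule sum.swap)
    also have "\<dots> = (\<Sum>r\<in>?R. \<Sum>c\<in>?C. \<Sum>u\<in>?W. of_int (sign c) * (f u * ?M r c u))"
      by (simp only: sum.swap[of _ ?W])
    also have "\<dots> = eval_poly lams (young_sym lams f) s i j"
      by (simp only: eval_young_sym[OF True] sum_distrib_left)
    finally show ?thesis by (rule sym)
  qed
qed

context vector_space
begin

lemma dim_eq_0_iff_subset_zero:
  assumes "V \<subseteq> span W" "finite W"
  shows "dim V = 0 \<longleftrightarrow> V \<subseteq> {0}"
proof -
  obtain B where B: "B \<subseteq> V" "independent B" "V \<subseteq> span B" "card B = dim V"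
    by (rule basis_exists)
  have "finite B"
    using independent_span_bound[OF assms(2) B(2)] B(1) assms(1) by auto
  then have "dim V = 0 \<longleftrightarrow> B = {}"
    by (metis B(4) card_0_eq)
  also have "\<dots> \<longleftrightarrow> V \<subseteq> {0}"
  proof
    assume "B = {}"
    then show "V \<subseteq> {0}" using B(3) by (simp add: span_empty)
  next
    assume "V \<subseteq> {0}"
    then show "B = {}" using B(1,2) dependent_zero by blast
  qed
  finally show ?thesis .
qed

end

lemma vector_space_fscale: "vector_space (fscale :: 'a::field \<Rightarrow> ((nat \<Rightarrow> 'a mat3) \<Rightarrow> 'a mat3) \<Rightarrow> _)"
  by unfold_locales (auto simp: fscale_def fun_eq_iff algebra_simps)

lemma star_mult_eq_0_iff:
  "star_mult TYPE('a::field) l1 l2 l3 l4 = 0 \<longleftrightarrow>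
    (\<forall>f :: nat list \<Rightarrow> 'a. eval_poly [l1, l2, l3, l4] (young_sym [l1, l2, l3, l4] f) = 0)"
proof -
  interpret vector_space "fscale :: 'a \<Rightarrow> ((nat \<Rightarrow> 'a mat3) \<Rightarrow> 'a mat3) \<Rightarrow> _"
    by (rule vector_space_fscale)
  let ?lams = "[l1, l2, l3, l4]"
  let ?V = "range (\<lambda>f :: nat list \<Rightarrow> 'a. eval_poly ?lams (young_sym ?lams f))"
  let ?T = "(\<lambda>u. eval_poly ?lams (young_sym ?lams (word_indicator u :: nat list \<Rightarrow> 'a)))
    ` mlwords (total_size ?lams)"
  have "?V \<subseteq> span ?T"
  proof (rule image_subsetI)
    fix f :: "nat list \<Rightarrow> 'a"
    show "eval_poly ?lams (young_sym ?lams f) \<in> span ?T"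
      unfolding eval_young_sym_eq_sum_word_indicator[of ?lams f]
      by (intro span_sum span_scale span_base) auto
  qed
  then have "star_mult TYPE('a) l1 l2 l3 l4 = 0 \<longleftrightarrow> ?V \<subseteq> {0}"
    unfolding star_mult_def by (rule dim_eq_0_iff_subset_zero) (simp add: finite_mlwords)
  then show ?thesis
    by (simp add: image_subset_iff)
qed

section \<open>Two rows of symmetric even letters force vanishing\<close>

lemma sum_signed_eq_0_if_transpose_invariant:
  fixes g :: "('b \<Rightarrow> 'b) \<Rightarrow> 'a::comm_ring_1"
  assumes "a \<noteq> b" "\<And>c. c \<in> C \<Longrightarrow> permutation c"
    and "\<And>c. c \<in> C \<Longrightarrow> c \<circ> transpose a b \<in> C"
    and "\<And>c. c \<in> C \<Longrightarrow> g (c \<circ> transpose a b) = g c"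
  shows "(\<Sum>c\<in>C. of_int (sign c) * g c) = 0"
proof (rule sum_involution_eq_0[where h = "\<lambda>c. c \<circ> transpose a b"])
  fix c assume c: "c \<in> C"
  have "sign (c \<circ> transpose a b) = - sign c"
    using assms(1) assms(2)[OF c] by (simp add: sign_compose permutation_swap_id sign_swap_id)
  then show "of_int (sign (c \<circ> transpose a b)) * g (c \<circ> transpose a b) + of_int (sign c) * g c = 0"
    using assms(4)[OF c] by simp
  show "c \<circ> transpose a b \<in> C" by (rule assms(3)[OF c])
  show "c \<circ> transpose a b \<circ> transpose a b = c" by (simp add: comp_assoc)
  have "inj c"
    using assms(2)[OF c] by (simp add: permutation_bijective bij_is_inj)
  then show "c \<circ> transpose a b \<noteq> c"
    using assms(1) by (metis comp_apply injD transpose_apply_first)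
qed

lemma block_of_first_column:
  assumes "0 < a" "0 < b"
  shows "block_of [[a, b], l2, [], []] 0 = 0" "block_of [[a, b], l2, [], []] a = 0"
  using assms by (auto intro!: block_of_eq)

lemma transpose_first_column_in_col_group:
  assumes "0 < a" "0 < b"
  shows "transpose 0 a \<in> col_group [[a, b], l2, [], []]"
proof -
  have "col_lab [[a, b], l2, [], []] a = col_lab [[a, b], l2, [], []] 0"
    using assms block_of_first_column[OF assms] row_in_eq[of 1 "[a, b]" a] row_in_eq[of 0 "[a, b]" 0]
    by (simp add: col_lab_def local_idx_eq col_in_def)
  then show ?thesis
    using assms by (auto simp: col_group_def permutes_swap_id transpose_def)
qed

lemma mprod_transpose_first_column:
  assumes "0 < a" "0 < b" "admissible [[a, b], l2, [], []] t"
    and "u \<in> mlwords (total_size [[a, b], l2, [], []])"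
  shows "mprod (map (t \<circ> transpose 0 a) u) = mprod (map t u)"
proof -
  let ?lams = "[[a, b], l2, [], []]"
  have t: "t x \<in> part (block_of ?lams x)" if "x < total_size ?lams" for x
    using assms(3) that by (simp add: admissible_def)
  have even: "t x \<in> part 0 \<union> part 1" if "x \<in> set u" for x
    using that assms(4) t[of x] block_of_le_1[of x "[a, b]" l2 "[]" "[]"]
    by (cases "block_of ?lams x") (auto simp: mlwords_def)
  have sym: "t 0 \<in> part 0" "t a \<in> part 0"
    using assms(1,2) t[of 0] t[of a] block_of_first_column[OF assms(1,2)] by simp_all
  show ?thesis
    using assms(1,2,4) part_0_commute[OF sym(1) even] part_0_commute[OF sym(2) even]
    by (intro mprod_transpose_central) (auto simp: mlwords_def)
qed

lemma eval_young_sym_eq_0_if_two_rows: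
  fixes f :: "nat list \<Rightarrow> 'a::field"
  assumes "0 < a" "0 < b"
  shows "eval_poly [[a, b], l2, [], []] (young_sym [[a, b], l2, [], []] f) = 0"
proof (intro ext)
  fix s :: "nat \<Rightarrow> 'a mat3" and i j
  let ?lams = "[[a, b], l2, [], []]" and ?\<tau> = "transpose 0 a"
  let ?W = "mlwords (total_size ?lams)"
  show "eval_poly ?lams (young_sym ?lams f) s i j = 0 s i j"
  proof (cases "admissible ?lams s")
    case False
    then show ?thesis by (simp add: eval_poly_def)
  next
    case adm: True
    have "(\<Sum>c\<in>col_group ?lams. of_int (sign c) * (\<Sum>u\<in>?W. f u * mprod (map (s \<circ> r \<circ> c) u) i j)) = 0"
      if r: "r \<in> row_group ?lams" for r
    proof (rule sum_signed_eq_0_if_transpose_invariant)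
      fix c assume c: "c \<in> col_group ?lams"
      show "permutation c"
        using col_group_permutes[OF c] by (auto intro: permutes_imp_permutation)
      show "c \<circ> ?\<tau> \<in> col_group ?lams"
        using c transpose_first_column_in_col_group[OF assms] by (rule col_group_compose)
      have "mprod (map (s \<circ> r \<circ> c \<circ> ?\<tau>) u) = mprod (map (s \<circ> r \<circ> c) u)" if "u \<in> ?W" for u
        using assms admissible_compose_row_col_group[OF adm r c] that
        by (rule mprod_transpose_first_column)
      then show "(\<Sum>u\<in>?W. f u * mprod (map (s \<circ> r \<circ> (c \<circ> ?\<tau>)) u) i j) =
          (\<Sum>u\<in>?W. f u * mprod (map (s \<circ> r \<circ> c) u) i j)"
        by (simp add: comp_assoc)
    qed (use assms in simp)
    then show ?thesis
      using eval_young_sym[OF adm, of f i j] by simp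
  qed
qed

section \<open>Column antisymmetrization factors into standard polynomials\<close>

definition block_perms :: "nat list list \<Rightarrow> (nat \<Rightarrow> nat) set" where
  "block_perms Ls = {c. c permutes set (concat Ls) \<and> (\<forall>L\<in>set Ls. \<forall>x\<in>set L. c x \<in> set L)}"

definition std_poly :: "(nat \<Rightarrow> 'a::field mat3) \<Rightarrow> nat list \<Rightarrow> 'a mat3" where
  "std_poly t L = (\<Sum>\<sigma> | \<sigma> permutes set L. smat (of_int (sign \<sigma>)) (mprod (map (t \<circ> \<sigma>) L)))"

lemma restrict_id_permutes:
  assumes "d permutes S" "finite A" "d ` A \<subseteq> A"
  shows "restrict_id d A permutes A"
proof (rule permutes_restrict_id)
  have "inj_on d A"
    using permutes_inj[OF assms(1)] by (auto simp: inj_on_def inj_def)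
  then show "bij_betw d A A"
    using endo_inj_surj[OF assms(2,3)] by (simp add: bij_betw_def)
qed

lemma compose_block_perms_Cons:
  assumes disj: "set L \<inter> set (concat Ls) = {}"
    and \<sigma>: "\<sigma> permutes set L" and c: "c \<in> block_perms Ls"
  shows "\<sigma> \<circ> c \<in> block_perms (L # Ls)"
    and "restrict_id (\<sigma> \<circ> c) (set L) = \<sigma>" "restrict_id (\<sigma> \<circ> c) (set (concat Ls)) = c"
proof -
  have c_perm: "c permutes set (concat Ls)"
    using c by (simp add: block_perms_def)
  have c_on_L: "c x = x" if "x \<in> set L" for x
    using permutes_not_in[OF c_perm] that disj by auto
  have \<sigma>_on_Ls: "\<sigma> (c x) = c x" if "x \<in> set (concat Ls)" for x
    using permutes_not_in[OF \<sigma>] permutes_in_image[OF c_perm] that disj by auto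
  have "\<sigma> \<circ> c permutes set L \<union> set (concat Ls)"
    using permutes_compose[OF permutes_subset[OF c_perm] permutes_subset[OF \<sigma>]] by auto
  then show "\<sigma> \<circ> c \<in> block_perms (L # Ls)"
    using c permutes_in_image[OF \<sigma>] c_on_L \<sigma>_on_Ls by (fastforce simp: block_perms_def)
  show "restrict_id (\<sigma> \<circ> c) (set L) = \<sigma>" "restrict_id (\<sigma> \<circ> c) (set (concat Ls)) = c"
    using permutes_not_in[OF \<sigma>] permutes_not_in[OF c_perm] c_on_L \<sigma>_on_Ls
    by (auto simp: restrict_id_def fun_eq_iff)
qed

lemma restrict_id_block_perms_Cons:
  assumes disj: "set L \<inter> set (concat Ls) = {}" and d: "d \<in> block_perms (L # Ls)"
  shows "restrict_id d (set L) permutes set L" "restrict_id d (set (concat Ls)) \<in> block_perms Ls"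
    and "restrict_id d (set L) \<circ> restrict_id d (set (concat Ls)) = d"
proof -
  have d_perm: "d permutes set L \<union> set (concat Ls)" and "\<forall>x\<in>set L. d x \<in> set L"
    and "\<forall>x\<in>set (concat Ls). d x \<in> set (concat Ls)" and "\<forall>L'\<in>set Ls. \<forall>x\<in>set L'. d x \<in> set L'"
    using d by (auto simp: block_perms_def)
  moreover from this have "restrict_id d (set L) permutes set L"
    and "restrict_id d (set (concat Ls)) permutes set (concat Ls)"
    by (auto intro!: restrict_id_permutes[OF d_perm])
  ultimately show "restrict_id d (set L) permutes set L" "restrict_id d (set (concat Ls)) \<in> block_perms Ls"
    and "restrict_id d (set L) \<circ> restrict_id d (set (concat Ls)) = d"
    using disj permutes_not_in[OF d_perm] by (auto simp: block_perms_def restrict_id_def fun_eq_iff)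
qed

lemma bij_betw_compose_block_perms:
  assumes "set L \<inter> set (concat Ls) = {}"
  shows "bij_betw (\<lambda>(\<sigma>, c). \<sigma> \<circ> c) ({\<sigma>. \<sigma> permutes set L} \<times> block_perms Ls) (block_perms (L # Ls))"
  by (rule bij_betw_byWitness[where f' = "\<lambda>d. (restrict_id d (set L), restrict_id d (set (concat Ls)))"])
     (use compose_block_perms_Cons[OF assms] restrict_id_block_perms_Cons[OF assms] in auto)

lemma sum_block_perms_signed_mprod:
  fixes t :: "nat \<Rightarrow> 'a::field mat3"
  assumes "distinct (concat Ls)" "\<And>x. in_M3 (t x)"
  shows "(\<Sum>c\<in>block_perms Ls. smat (of_int (sign c)) (mprod (map (t \<circ> c) (concat Ls)))) =
         mprod (map (std_poly t) Ls)"
  using assms(1)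
proof (induction Ls)
  case Nil
  have "block_perms [] = {id}"
    by (auto simp: block_perms_def)
  then show ?case by simp
next
  case (Cons L Ls)
  let ?A = "set L" and ?B = "set (concat Ls)"
  let ?g = "\<lambda>d. smat (of_int (sign d)) (mprod (map (t \<circ> d) (concat (L # Ls))))"
  let ?rest = "\<lambda>c. smat (of_int (sign c)) (mprod (map (t \<circ> c) (concat Ls)))"
  have disj: "?A \<inter> ?B = {}"
    using Cons.prems by auto
  have "sum ?g (block_perms (L # Ls)) = (\<Sum>(\<sigma>, c) \<in> {\<sigma>. \<sigma> permutes ?A} \<times> block_perms Ls. ?g (\<sigma> \<circ> c))"
    using sum.reindex_bij_betw[OF bij_betw_compose_block_perms[OF disj], of ?g]
    by (simp add: case_prod_unfold)
  also have "\<dots> = (\<Sum>\<sigma> | \<sigma> permutes ?A. \<Sum>c\<in>block_perms Ls.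
      mmul (smat (of_int (sign \<sigma>)) (mprod (map (t \<circ> \<sigma>) L))) (?rest c))"
    unfolding sum.cartesian_product[symmetric]
  proof (intro sum.cong refl)
    fix \<sigma> c assume "\<sigma> \<in> {\<sigma>. \<sigma> permutes ?A}" and c: "c \<in> block_perms Ls"
    then have \<sigma>: "\<sigma> permutes ?A" and c_perm: "c permutes ?B"
      by (simp_all add: block_perms_def)
    have map_L: "map (t \<circ> (\<sigma> \<circ> c)) L = map (t \<circ> \<sigma>) L"
      using permutes_not_in[OF c_perm] disj by (auto simp del: set_concat simp add: disjoint_iff)
    have map_Ls: "map (t \<circ> (\<sigma> \<circ> c)) (concat Ls) = map (t \<circ> c) (concat Ls)"
      using permutes_not_in[OF \<sigma>] permutes_in_image[OF c_perm] disj
      by (auto simp del: set_concat simp add: disjoint_iff) metis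
    have sign: "sign (\<sigma> \<circ> c) = sign \<sigma> * sign c"
      using sign_compose permutes_imp_permutation[OF _ \<sigma>] permutes_imp_permutation[OF _ c_perm] by simp
    show "?g (\<sigma> \<circ> c) = mmul (smat (of_int (sign \<sigma>)) (mprod (map (t \<circ> \<sigma>) L))) (?rest c)"
      using assms(2) by (simp only: concat.simps map_append map_L map_Ls sign smat_mmul_smat
          of_int_mult) (simp add: mprod_append)
  qed
  also have "\<dots> = mmul (std_poly t L) (sum ?rest (block_perms Ls))"
    by (simp add: std_poly_def mmul_sum_left mmul_sum_right) (rule sum.swap)
  also have "\<dots> = mprod (map (std_poly t) (L # Ls))"
    using Cons.prems by (subst Cons.IH) simp_all
  finally show ?case .
qed

lemma std_poly_singleton: "std_poly t [a] = mprod [t a]"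
  by (simp add: std_poly_def)

lemma permutes_doubleton_eq: "{\<sigma>. \<sigma> permutes {a, b}} = {id, transpose a b}"
  using permutes_doubleton_iff[of _ a b] by auto

lemma std_poly_pair:
  assumes "a \<noteq> b"
  shows "std_poly t [a, b] = mprod [t a, t b] - mprod [t b, t a]"
proof -
  have "id \<noteq> transpose a b"
    using assms by (metis id_apply transpose_apply_first)
  then show ?thesis
    using assms by (simp add: std_poly_def permutes_doubleton_eq sign_swap_id)
qed

lemma std_poly_triple:
  assumes "distinct [a, b, c]"
  shows "std_poly t [a, b, c] = mprod [t a, t b, t c] - mprod [t a, t c, t b] - mprod [t b, t a, t c]
     + mprod [t b, t c, t a] + mprod [t c, t a, t b] - mprod [t c, t b, t a]"
proof -
  have "b \<noteq> c"
    using assms by simp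
  then have "id \<noteq> transpose b c"
    by (metis id_apply transpose_apply_first)
  moreover have "set [a, b, c] = insert a {b, c}" "a \<notin> {b, c}"
    using assms by auto
  ultimately have "std_poly t [a, b, c] = (\<Sum>x\<in>insert a {b, c}. \<Sum>\<sigma> | \<sigma> permutes {b, c}.
      smat (of_int (sign (transpose a x \<circ> \<sigma>))) (mprod (map (t \<circ> (transpose a x \<circ> \<sigma>)) [a, b, c])))"
    unfolding std_poly_def by (simp add: sum_over_permutations_insert)
  also have "\<dots> = smat 1 (mprod [t a, t b, t c]) + smat (-1) (mprod [t a, t c, t b])
     + (smat (-1) (mprod [t b, t a, t c]) + smat 1 (mprod [t b, t c, t a]))
     + (smat (-1) (mprod [t c, t b, t a]) + smat 1 (mprod [t c, t a, t b]))"
    using assms \<open>id \<noteq> transpose b c\<close>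
    by (simp add: permutes_doubleton_eq sign_compose permutation_swap_id sign_swap_id
          transpose_def del: smat_1 smat_minus_1)
  finally show ?thesis by (simp add: algebra_simps)
qed

section \<open>Units of the lower right 2x2 corner\<close>

definition corner_id :: "'a::field mat3" where
  "corner_id = E 1 1 + E 2 2"

definition corner_unit :: "'a::field mat3 \<Rightarrow> bool" where
  "corner_unit X \<longleftrightarrow> mmul corner_id X = X \<and> mmul X corner_id = X \<and> (\<exists>Y. mmul X Y = corner_id)"

lemma corner_unit_mmul:
  assumes X: "corner_unit X" and Z: "corner_unit Z"
  shows "corner_unit (mmul X Z)"
proof -
  obtain Y1 Y2 where Y1: "mmul X Y1 = corner_id" and Y2: "mmul Z Y2 = corner_id"
    using X Z by (auto simp: corner_unit_def)
  have X_id: "mmul corner_id X = X" "mmul X corner_id = X"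
    and Z_id: "mmul corner_id Z = Z" "mmul Z corner_id = Z"
    using X Z by (simp_all add: corner_unit_def)
  have "mmul (mmul X Z) (mmul Y2 Y1) = mmul X (mmul (mmul Z Y2) Y1)"
    by (simp add: mmul_assoc)
  also have "\<dots> = corner_id"
    by (simp add: Y1 Y2 X_id flip: mmul_assoc)
  finally have "mmul (mmul X Z) (mmul Y2 Y1) = corner_id" .
  moreover have "mmul corner_id (mmul X Z) = mmul X Z"
    by (simp add: X_id flip: mmul_assoc)
  moreover have "mmul (mmul X Z) corner_id = mmul X Z"
    by (simp add: Z_id mmul_assoc)
  ultimately show ?thesis
    unfolding corner_unit_def by blast
qed

lemma corner_unit_in_M3:
  assumes "corner_unit X"
  shows "in_M3 X"
  unfolding in_M3_def
proof (intro allI impI)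
  fix i j :: nat
  assume "3 \<le> i \<or> 3 \<le> j"
  moreover have "X i j = mmul corner_id X i j" "X i j = mmul X corner_id i j"
    using assms by (simp_all add: corner_unit_def)
  ultimately show "X i j = 0"
    by (auto simp: mmul_def sum_lessThan_3 corner_id_def E_def)
qed

lemma corner_unit_neq_0:
  assumes "corner_unit X"
  shows "X \<noteq> 0"
proof
  assume "X = 0"
  moreover obtain Y where "mmul X Y = corner_id"
    using assms by (auto simp: corner_unit_def)
  ultimately have "mmul 0 Y 1 1 = (corner_id 1 1 :: 'a)"
    by simp
  then show False
    by (simp add: mmul_def corner_id_def E_def)
qed

lemma mprod_corner_units:
  assumes "\<forall>X\<in>set Xs. X = I3 \<or> corner_unit X"
  shows "mprod Xs = I3 \<or> corner_unit (mprod Xs)"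
  using assms
proof (induction Xs)
  case (Cons X Xs)
  then have "in_M3 (mprod Xs)"
    using in_M3_I3 corner_unit_in_M3 by auto
  from Cons.prems consider "X = I3" | "corner_unit X"
    by auto
  then show ?case
  proof cases
    case 1
    then show ?thesis
      using Cons \<open>in_M3 (mprod Xs)\<close> by (simp add: I3_mmul)
  next
    case 2
    then show ?thesis
      using Cons corner_unit_mmul by (auto simp: mmul_I3 corner_unit_in_M3)
  qed
qed simp

lemma mprod_corner_units_neq_0:
  assumes "\<forall>X\<in>set Xs. X = I3 \<or> corner_unit X"
  shows "mprod Xs \<noteq> 0"
proof -
  have "(I3 :: 'a mat3) 0 0 \<noteq> 0 0 0"
    by (simp add: I3_def)
  then have "(I3 :: 'a mat3) \<noteq> 0"
    by metis
  then show ?thesis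
    using mprod_corner_units[OF assms] corner_unit_neq_0 by auto
qed

definition Hmat :: "'a::field mat3" where "Hmat = E 1 1 - E 2 2"
definition Xmat :: "'a::field mat3" where "Xmat = E 1 2 + E 2 1"
definition Ymat :: "'a::field mat3" where "Ymat = E 1 2 - E 2 1"

lemmas corner_mat_defs = mmul_def sum_lessThan_3 E_def smat_def fun_eq_iff Hmat_def Xmat_def Ymat_def
  corner_id_def I3_def

lemma std_poly_Hmat_Xmat_Ymat:
  "mprod [Hmat, Xmat, Ymat] - mprod [Hmat, Ymat, Xmat] - mprod [Xmat, Hmat, Ymat]
     + mprod [Xmat, Ymat, Hmat] + mprod [Ymat, Hmat, Xmat] - mprod [Ymat, Xmat, Hmat]
   = smat (-6) (corner_id :: 'a::field mat3)"
  "mprod [Hmat, Xmat] - mprod [Xmat, Hmat] = smat 2 (Ymat :: 'a::field mat3)"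
  "mprod [Hmat] = (Hmat :: 'a::field mat3)"
  by (auto simp: corner_mat_defs)

lemma corner_unit_Hmat: "corner_unit (Hmat :: 'a::field mat3)"
  unfolding corner_unit_def by (auto simp: corner_mat_defs intro!: exI[of _ Hmat])

lemma corner_unit_Ymat: "corner_unit (smat 2 Ymat :: 'a::field_char_0 mat3)"
  unfolding corner_unit_def by (auto simp: corner_mat_defs intro!: exI[of _ "smat (-1/2) Ymat"])

lemma corner_unit_corner_id: "corner_unit (smat (-6) corner_id :: 'a::field_char_0 mat3)"
  unfolding corner_unit_def by (auto simp: corner_mat_defs intro!: exI[of _ "smat (-1/6) corner_id"])

lemma part_1_iff: "x \<in> part 1 \<longleftrightarrow> (\<exists>a b c. x = smat a (E 1 1 - E 2 2) + smat b (E 1 2) + smat c (E 2 1))"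
  by (simp add: part_def)

lemma Hmat_part_1: "Hmat \<in> part 1"
  unfolding part_1_iff
  by (rule exI[of _ 1], rule exI[of _ 0], rule exI[of _ 0]) (auto simp: Hmat_def smat_def fun_eq_iff)

lemma Xmat_part_1: "Xmat \<in> part 1"
  unfolding part_1_iff
  by (rule exI[of _ 0], rule exI[of _ 1], rule exI[of _ 1]) (auto simp: Xmat_def smat_def fun_eq_iff)

lemma Ymat_part_1: "Ymat \<in> part 1"
  unfolding part_1_iff
  by (rule exI[of _ 0], rule exI[of _ 1], rule exI[of _ "-1"]) (auto simp: Ymat_def smat_def fun_eq_iff)

lemma I3_part_0: "I3 \<in> part 0"
  unfolding part_def
  by (simp, rule exI[of _ 1], rule exI[of _ 1]) (auto simp: I3_def E_def smat_def fun_eq_iff)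

section \<open>A nonvanishing evaluation when the first shape has one row\<close>

lemma sum_list_take_pad: "sum_list (take i (l @ replicate k 0)) = sum_list (take i (l :: nat list))"
  by (simp add: take_append)

text \<open>The padding says that \<^term>\<open>l1\<close> is \<^term>\<open>[]\<close> or \<^term>\<open>[m]\<close> and that \<^term>\<open>l2\<close>,
  filled up with zero rows, is \<^term>\<open>[p, q, r]\<close>.\<close>

locale one_row_three_rows =
  fixes l1 l2 :: "nat list" and m p q r :: nat
  assumes pad_l1: "l1 @ replicate (1 - length l1) 0 = [m]"
    and pad_l2: "l2 @ replicate (3 - length l2) 0 = [p, q, r]"
    and q_le_p: "q \<le> p" and r_le_q: "r \<le> q"
begin

abbreviation lams :: "nat list list" where
  "lams \<equiv> [l1, l2, [], []]"

lemma sum_list_take_l1: "sum_list (take i l1) = sum_list (take i [m])"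
  using sum_list_take_pad[of i l1] pad_l1 by metis

lemma sum_list_take_l2: "sum_list (take i l2) = sum_list (take i [p, q, r])"
  using sum_list_take_pad[of i l2] pad_l2 by metis

lemma sum_list_l1: "sum_list l1 = m"
  using arg_cong[OF pad_l1, of sum_list] by (simp add: sum_list_replicate)

lemma sum_list_l2: "sum_list l2 = p + q + r"
  using arg_cong[OF pad_l2, of sum_list] by (simp add: sum_list_replicate)

lemma total_size_lams: "total_size lams = m + p + q + r"
  by (simp add: sum_list_l1 sum_list_l2)

text \<open>Letters are numbered block by block and row by row, so this is the letter in row \<open>i\<close>,
  column \<open>j\<close> of the second tableau.\<close>

definition letter :: "nat \<Rightarrow> nat \<Rightarrow> nat" where
  "letter i j = m + sum_list (take i [p, q, r]) + j"

lemma le_letter: "m \<le> letter i j"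
  by (simp add: letter_def)

lemma labels_block_0:
  assumes "k < m"
  shows "block_of lams k = 0" "row_lab lams k = (0, 0)" "col_lab lams k = (0, k)"
proof -
  show block: "block_of lams k = 0"
    using assms by (intro block_of_eq) (simp_all add: sum_list_l1)
  have "row_in l1 k = 0"
    using assms sum_list_take_l1[of 1] by (intro row_in_eq) simp_all
  then show "row_lab lams k = (0, 0)" "col_lab lams k = (0, k)"
    using block by (simp_all add: row_lab_def col_lab_def local_idx_eq col_in_def)
qed

lemma labels_block_1:
  assumes "i < 3" "j < [p, q, r] ! i"
  shows "block_of lams (letter i j) = 1" "row_lab lams (letter i j) = (1, i)"
    "col_lab lams (letter i j) = (1, j)"
proof -
  have i: "i = 0 \<or> i = 1 \<or> i = 2"
    using assms(1) by auto
  have lt: "sum_list (take i [p, q, r]) + j < sum_list (take (Suc i) [p, q, r])"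
    using i assms(2) by auto
  have "sum_list (take (Suc i) [p, q, r]) \<le> p + q + r"
    using i by auto
  then show block: "block_of lams (letter i j) = 1"
    using lt by (intro block_of_eq) (auto simp: letter_def numeral_2_eq_2 sum_list_l1 sum_list_l2)
  have "row_in l2 (sum_list (take i [p, q, r]) + j) = i"
    using lt by (intro row_in_eq) (simp_all add: sum_list_take_l2)
  then show "row_lab lams (letter i j) = (1, i)" "col_lab lams (letter i j) = (1, j)"
    using block
    by (simp_all add: row_lab_def col_lab_def local_idx_eq col_in_def sum_list_take_l2 letter_def
        sum_list_l1)
qed

lemma letter_cases:
  assumes "k < m + p + q + r"
  obtains "k < m" | i j where "i < 3" "j < [p, q, r] ! i" "k = letter i j"
proof -
  consider "k < m" | "m \<le> k" "k < m + p" | "m + p \<le> k" "k < m + p + q" | "m + p + q \<le> k"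
    by linarith
  then show ?thesis
  proof cases
    case 2
    then show ?thesis using that(2)[of 0 "k - m"] by (simp add: letter_def)
  next
    case 3
    then show ?thesis using that(2)[of 1 "k - m - p"] by (simp add: letter_def)
  next
    case 4
    then show ?thesis using that(2)[of 2 "k - m - p - q"] assms by (simp add: letter_def numeral_2_eq_2)
  qed (use that in blast)
qed

definition column :: "nat \<Rightarrow> nat list" where
  "column j = letter 0 j # (if j < q then [letter 1 j] else []) @ (if j < r then [letter 2 j] else [])"

definition columns :: "nat list list" where
  "columns = map (\<lambda>k. [k]) [0..<m] @ map column [0..<p]"

lemma mem_column:
  assumes "j < p"
  shows "x \<in> set (column j) \<longleftrightarrow> (\<exists>i<3. j < [p, q, r] ! i \<and> x = letter i j)"
proof
  assume "\<exists>i<3. j < [p, q, r] ! i \<and> x = letter i j"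
  then obtain i where "i < 3" "j < [p, q, r] ! i" "x = letter i j"
    by blast
  moreover have "i = 0 \<or> i = 1 \<or> i = 2"
    using \<open>i < 3\<close> by auto
  ultimately show "x \<in> set (column j)"
    by (auto simp: column_def)
qed (use assms in \<open>auto simp: column_def split: if_splits intro: exI[of _ 0] exI[of _ 1] exI[of _ 2]\<close>)

lemma col_lab_column:
  assumes "j < p" "x \<in> set (column j)"
  shows "col_lab lams x = (1, j)"
  using assms labels_block_1(3) by (auto simp: mem_column)

lemma col_lab_eq_iff_same_column:
  assumes "L \<in> set columns" "x \<in> set L" "y < m + p + q + r"
  shows "col_lab lams y = col_lab lams x \<longleftrightarrow> y \<in> set L"
proof -
  consider k where "k < m" "L = [k]" | j where "j < p" "L = column j"
    using assms(1) by (auto simp: columns_def)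
  then show ?thesis
  proof cases
    case 1
    then show ?thesis
      using assms(2,3) labels_block_0 labels_block_1 le_letter
      by (cases rule: letter_cases[OF assms(3)]) (auto simp: leD)
  next
    case 2
    then have x: "col_lab lams x = (1, j)"
      using assms(2) col_lab_column by simp
    show ?thesis
    proof (cases rule: letter_cases[OF assms(3)])
      case 1
      then show ?thesis
        using x 2 labels_block_0(3)[OF 1] col_lab_column[OF \<open>j < p\<close>, of y] by auto
    next
      case (2 i j')
      then have y: "col_lab lams y = (1, j')"
        using labels_block_1(3) by simp
      have "y \<in> set (column j) \<longleftrightarrow> j' = j"
      proof
        assume "y \<in> set (column j)"
        then show "j' = j"
          using col_lab_column[OF \<open>j < p\<close>] y by simp
      next
        assume "j' = j"
        then show "y \<in> set (column j)"
          using mem_column[OF \<open>j < p\<close>] 2 by blast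
      qed
      then show ?thesis
        using x y \<open>L = column j\<close> by simp
    qed
  qed
qed

lemma set_concat_columns: "set (concat columns) = {0..<m + p + q + r}"
proof
  show "set (concat columns) \<subseteq> {0..<m + p + q + r}"
    using q_le_p r_le_q by (auto simp: columns_def column_def letter_def split: if_splits)
  show "{0..<m + p + q + r} \<subseteq> set (concat columns)"
  proof
    fix y assume "y \<in> {0..<m + p + q + r}"
    then have "y < m + p + q + r" by simp
    then show "y \<in> set (concat columns)"
    proof (cases rule: letter_cases)
      case 1
      then show ?thesis by (auto simp: columns_def)
    next
      case (2 i j)
      then have "j < p"
        using q_le_p r_le_q by (auto simp: less_Suc_eq numeral_3_eq_3)
      then show ?thesis
        using 2 mem_column by (auto simp: columns_def)
    qed
  qed
qed

lemma length_concat_columns: "length (concat columns) = m + p + q + r"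
proof -
  have "(\<Sum>j<p. if j < k then 1 else 0 :: nat) = k" if "k \<le> p" for k
    using that by (simp add: sum.If_cases Int_absorb1 subset_eq)
  moreover have "length (column j) = 1 + (if j < q then 1 else 0) + (if j < r then 1 else 0)" for j
    by (simp add: column_def)
  ultimately have "(\<Sum>j<p. length (column j)) = p + q + r"
    using q_le_p r_le_q by (simp only: sum.distrib) simp
  moreover have "(\<Sum>j\<leftarrow>[0..<p]. length (column j)) = (\<Sum>j<p. length (column j))"
    by (simp add: sum_set_upt_conv_sum_list_nat[symmetric] atLeast0LessThan)
  ultimately show ?thesis
    by (simp add: columns_def length_concat comp_def)
qed

lemma distinct_concat_columns: "distinct (concat columns)"
  using set_concat_columns length_concat_columns by (intro card_distinct) (metis card_atLeastLessThan diff_zero)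

lemma col_group_eq_block_perms: "col_group lams = block_perms columns"
proof -
  have "(\<forall>k < m + p + q + r. col_lab lams (c k) = col_lab lams k) \<longleftrightarrow>
        (\<forall>L\<in>set columns. \<forall>x\<in>set L. c x \<in> set L)" if c: "c permutes {0..<m + p + q + r}" for c
  proof
    assume "\<forall>k < m + p + q + r. col_lab lams (c k) = col_lab lams k"
    moreover have "x < m + p + q + r" "c x < m + p + q + r" if "L \<in> set columns" "x \<in> set L" for L x
      using that set_concat_columns permutes_in_image[OF c, of x] by auto
    ultimately show "\<forall>L\<in>set columns. \<forall>x\<in>set L. c x \<in> set L"
      using col_lab_eq_iff_same_column by blast
  next
    assume c_columns: "\<forall>L\<in>set columns. \<forall>x\<in>set L. c x \<in> set L"
    show "\<forall>k < m + p + q + r. col_lab lams (c k) = col_lab lams k"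
    proof (intro allI impI)
      fix k assume k: "k < m + p + q + r"
      then have "k \<in> set (concat columns)"
        by (simp only: set_concat_columns atLeastLessThan_iff) simp
      then obtain L where "L \<in> set columns" "k \<in> set L"
        by auto
      moreover have "c k < m + p + q + r"
        using permutes_in_image[OF c] k by simp
      ultimately show "col_lab lams (c k) = col_lab lams k"
        using col_lab_eq_iff_same_column c_columns by blast
    qed
  qed
  then show ?thesis
    unfolding col_group_def block_perms_def total_size_lams set_concat_columns by auto
qed

end

fun row_value :: "nat \<times> nat \<Rightarrow> 'a::field mat3" where
  "row_value (b, i) =
     (if b = 0 then I3 else if i = 0 then Hmat else if i = 1 then Xmat else if i = 2 then Ymat else 0)"

lemma in_M3_row_value: "in_M3 (row_value x)"
  by (cases x) (auto simp: in_M3_def I3_def Hmat_def Xmat_def Ymat_def E_def)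

lemma row_value_part_1: "i < 3 \<Longrightarrow> row_value (1, i) \<in> part 1"
  using Hmat_part_1 Xmat_part_1 Ymat_part_1 by (auto simp: less_Suc_eq numeral_3_eq_3)

context one_row_three_rows
begin

definition witness :: "nat \<Rightarrow> 'a::field mat3" where
  "witness = row_value \<circ> row_lab lams"

lemma witness_block_0: "k < m \<Longrightarrow> witness k = I3"
  by (simp add: witness_def labels_block_0)

lemma witness_letter:
  "i < 3 \<Longrightarrow> j < [p, q, r] ! i \<Longrightarrow> witness (letter i j) = (row_value (1, i) :: 'a::field mat3)"
  by (simp add: witness_def labels_block_1(2))

lemma witness_block_1:
  "j < p \<Longrightarrow> witness (letter 0 j) = (Hmat :: 'a::field mat3)"
  "j < q \<Longrightarrow> witness (letter 1 j) = (Xmat :: 'a mat3)"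
  "j < r \<Longrightarrow> witness (letter 2 j) = (Ymat :: 'a mat3)"
  using witness_letter[of 0 j] witness_letter[of 1 j] witness_letter[of 2 j] by simp_all

lemma admissible_witness: "admissible lams witness"
  unfolding admissible_def total_size_lams
proof (intro allI impI)
  fix k assume "k < m + p + q + r"
  then show "witness k \<in> part (block_of lams k)"
  proof (cases rule: letter_cases)
    case 1
    then show ?thesis by (simp add: witness_block_0 labels_block_0 I3_part_0)
  next
    case (2 i j)
    then show ?thesis
      using row_value_part_1[of i] by (simp add: witness_letter labels_block_1(1))
  qed
qed

lemma std_poly_witness_column:
  assumes "j < p"
  shows "corner_unit (std_poly (witness :: nat \<Rightarrow> 'a::field_char_0 mat3) (column j))"
proof -
  note witness_values = witness_block_1[where 'a = 'a]
  consider "j < r" | "r \<le> j" "j < q" | "q \<le> j"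
    by linarith
  then show ?thesis
  proof cases
    case 1
    then have "column j = [letter 0 j, letter 1 j, letter 2 j]" "distinct (column j)"
      using r_le_q assms by (auto simp: column_def letter_def)
    then have "std_poly witness (column j) = smat (-6) (corner_id :: 'a mat3)"
      using 1 r_le_q assms witness_values
      by (simp del: mprod_Cons add: std_poly_triple std_poly_Hmat_Xmat_Ymat(1))
    then show ?thesis
      by (simp add: corner_unit_corner_id)
  next
    case 2
    then have "column j = [letter 0 j, letter 1 j]" "letter 0 j \<noteq> letter 1 j"
      using assms by (auto simp: column_def letter_def)
    then have "std_poly witness (column j) = smat 2 (Ymat :: 'a mat3)"
      using 2 assms witness_values
      by (simp del: mprod_Cons add: std_poly_pair std_poly_Hmat_Xmat_Ymat(2))
    then show ?thesis
      by (simp add: corner_unit_Ymat)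
  next
    case 3
    then have "column j = [letter 0 j]"
      using r_le_q by (auto simp: column_def)
    then have "std_poly witness (column j) = (Hmat :: 'a mat3)"
      using assms witness_values
      by (simp del: mprod_Cons add: std_poly_singleton std_poly_Hmat_Xmat_Ymat(3))
    then show ?thesis
      by (simp add: corner_unit_Hmat)
  qed
qed

lemma mprod_std_poly_witness_columns_neq_0:
  "mprod (map (std_poly (witness :: nat \<Rightarrow> 'a::field_char_0 mat3)) columns) \<noteq> 0"
proof (rule mprod_corner_units_neq_0)
  show "\<forall>X\<in>set (map (std_poly witness) columns). X = (I3 :: 'a mat3) \<or> corner_unit X"
  proof
    fix X :: "'a mat3"
    assume "X \<in> set (map (std_poly witness) columns)"
    then obtain L where "L \<in> set columns" "X = std_poly witness L"
      by auto
    then consider k where "k < m" "X = std_poly witness [k]" | j where "j < p" "X = std_poly witness (column j)"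
      by (auto simp: columns_def)
    then show "X = I3 \<or> corner_unit X"
    proof cases
      case 1
      then show ?thesis by (simp add: std_poly_singleton witness_block_0 I3_mmul in_M3_I3)
    next
      case 2
      then show ?thesis by (simp add: std_poly_witness_column)
    qed
  qed
qed

lemma witness_row_group: "\<rho> \<in> row_group lams \<Longrightarrow> k < total_size lams \<Longrightarrow> witness (\<rho> k) = witness k"
  by (simp add: row_group_def witness_def)

lemma concat_columns_mlwords: "concat columns \<in> mlwords (total_size lams)"
  unfolding mlwords_def total_size_lams using distinct_concat_columns set_concat_columns by simp

lemma eval_young_sym_columns_witness:
  "eval_poly lams (young_sym lams (word_indicator (concat columns))) witness =
    smat (of_nat (card (row_group lams))) (mprod (map (std_poly (witness :: nat \<Rightarrow> 'a::field mat3)) columns))"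
proof (intro ext)
  fix i j
  let ?u = "concat columns" and ?R = "row_group lams" and ?C = "col_group lams"
  have row_invariant: "map (witness \<circ> \<rho> \<circ> c) ?u = map (witness \<circ> c) ?u"
    if "\<rho> \<in> ?R" "c \<in> ?C" for \<rho> c
    using concat_columns_mlwords permutes_in_image[OF col_group_permutes[OF that(2)]]
    by (auto simp: mlwords_def witness_row_group[OF that(1)])
  have "eval_poly lams (young_sym lams (word_indicator ?u)) witness i j =
     (\<Sum>\<rho>\<in>?R. \<Sum>c\<in>?C. of_int (sign c) * mprod (map (witness \<circ> \<rho> \<circ> c) ?u) i j)"
    by (rule eval_young_sym_word_indicator[OF admissible_witness concat_columns_mlwords])
  also have "\<dots> = (\<Sum>\<rho>\<in>?R. \<Sum>c\<in>?C. of_int (sign c) * mprod (map (witness \<circ> c) ?u) i j)"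
    by (intro sum.cong refl) (simp only: row_invariant)
  also have "\<dots> = of_nat (card ?R) * (\<Sum>c\<in>block_perms columns. smat (of_int (sign c)) (mprod (map (witness \<circ> c) ?u))) i j"
    by (simp add: col_group_eq_block_perms sum_apply smat_def)
  also have "\<dots> = smat (of_nat (card ?R)) (mprod (map (std_poly witness) columns)) i j"
    by (subst sum_block_perms_signed_mprod[OF distinct_concat_columns])
       (simp_all add: in_M3_row_value witness_def smat_def)
  finally show "eval_poly lams (young_sym lams (word_indicator ?u)) witness i j =
      smat (of_nat (card ?R)) (mprod (map (std_poly witness) columns)) i j" .
qed

lemma eval_young_sym_columns_neq_0:
  "eval_poly lams (young_sym lams (word_indicator (concat columns))) \<noteq> (0 :: _ \<Rightarrow> 'a::field_char_0 mat3)"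
proof -
  have "id \<in> row_group lams"
    by (simp add: row_group_def permutes_id)
  then have "card (row_group lams) \<noteq> 0"
    using finite_row_group by (metis card_0_eq empty_iff)
  then have "eval_poly lams (young_sym lams (word_indicator (concat columns))) witness \<noteq> (0 :: 'a mat3)"
    using mprod_std_poly_witness_columns_neq_0
    by (simp add: eval_young_sym_columns_witness smat_eq_0_iff)
  then show ?thesis
    by (metis zero_fun_apply)
qed

end

lemma one_row_three_rows_exists:
  assumes "is_partition l2" "length l1 \<le> 1" "length l2 \<le> 3"
  obtains m p q r where "one_row_three_rows l1 l2 m p q r"
proof -
  define pad1 where "pad1 = l1 @ replicate (1 - length l1) 0"
  define pad2 where "pad2 = l2 @ replicate (3 - length l2) 0"
  have "length pad1 = Suc 0"
    using assms(2) by (simp add: pad1_def)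
  then obtain m where m: "pad1 = [m]"
    by (auto simp: length_Suc_conv)
  have "length pad2 = Suc (Suc (Suc 0))"
    using assms(3) by (simp add: pad2_def)
  then obtain p q r where pqr: "pad2 = [p, q, r]"
    by (auto simp: length_Suc_conv)
  have "sorted_wrt (\<ge>) (replicate k (0::nat))" for k
    by (induction k) auto
  then have "sorted_wrt (\<ge>) pad2"
    using assms(1) by (auto simp: pad2_def is_partition_def sorted_wrt_append)
  then have "q \<le> p" "r \<le> q"
    by (simp_all add: pqr)
  with m pqr show ?thesis
    using that by (simp add: one_row_three_rows_def pad1_def pad2_def)
qed

lemma exists_eval_young_sym_neq_0_if_one_row:
  assumes "is_partition l2" "length l1 \<le> 1" "length l2 \<le> 3"
  shows "\<exists>f. eval_poly [l1, l2, [], []] (young_sym [l1, l2, [], []] f) \<noteq> (0 :: _ \<Rightarrow> 'a::field_char_0 mat3)"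
proof -
  obtain m p q r where "one_row_three_rows l1 l2 m p q r"
    using one_row_three_rows_exists assms by blast
  then show ?thesis
    by (blast dest: one_row_three_rows.eval_young_sym_columns_neq_0)
qed

theorem proposition5p2:
  fixes l1 l2 :: "nat list"
  assumes "is_partition l1" and "is_partition l2"
    and "length l1 \<le> 2" and "length l2 \<le> 3"
  shows "star_mult TYPE('a::field_char_0) l1 l2 [] [] \<noteq> 0 \<longleftrightarrow> length l1 \<le> 1"
proof (cases "length l1 \<le> 1")
  case True
  then show ?thesis
    using exists_eval_young_sym_neq_0_if_one_row[OF assms(2) True assms(4), where 'a = 'a]
    by (simp add: star_mult_eq_0_iff)
next
  case False
  then obtain a b where "l1 = [a, b]"
    using assms(3) by (auto simp: numeral_2_eq_2 length_Suc_conv le_Suc_eq)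
  moreover have "0 < a" "0 < b"
    using assms(1) \<open>l1 = [a, b]\<close> by (simp_all add: is_partition_def)
  ultimately show ?thesis
    using False eval_young_sym_eq_0_if_two_rows[where 'a = 'a] by (simp add: star_mult_eq_0_iff)
qed

end
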